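(* Let $P$ be a convex polygon with no two edges parallel, and let $e_i,e_j$ be edges with $e_i\prec e_j$. (1) In the domain $P$, the function $\mathrm{disprod}_{\ell_i,\ell_j}$ achieves its maximum value at a unique point, denoted $Z_i^j$. (2) The point $Z_i^j$ lies on $\partial P$; moreover it lies in both $[\mathsf{D}_i\circlearrowright \mathsf{D}_j]$ and $(v_{j+1}\circlearrowright v_i)$. (3) If $Z_i^j$ lies in some edge $e_k$, then it is the midpoint of $\mathsf{I}_{i,k}$ and $\mathsf{I}_{j,k}$.
   Context: $P$ is a compact convex polygon with boundary $\partial P$, edges $e_1,\ldots,e_n$ in clockwise order and vertices $v_1,\ldots,v_n$, where $e_i$ is the open segment from $v_i$ to $v_{i+1}$ (indices modulo $n$). $\ell_i$ is the line containing $e_i$, and $\mathsf{I}_{i,j}$ is the intersection point of $\ell_i$ and $\ell_j$. $d_l(X)$ is the distance from $X$ to line $l$ and $\mathrm{disprod}_{l,l'}(X)=d_l(X)d_{l'}(X)$. For distinct edges, $e_i\prec e_j$ ("$e_i$ is chasing $e_j$") means that $\mathsf{I}_{i,j}$ lies between $e_i$ and $e_j$ in the clockwise sense, i.e. $\mathsf{I}_{i,j}=v_i+t(v_{i+1}-v_i)$ for some $t\ge 1$ (equivalently, the clockwise turning angle from the direction $v_{i+1}-v_i$ to the direction $v_{j+1}-v_j$ lies strictly between $0$ and $\pi$); for any two distinct edges exactly one chases the other. $\mathsf{D}_i$ denotes the unique vertex of $P$ at largest distance from $\ell_i$. For $X,X'\in\partial P$, $[X\circlearrowright X']$ is the closed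 portion of $\partial P$ traversed moving clockwise from $X$ to $X'$, and $(X\circlearrowright X')$ is the same portion without its endpoints. *)

theory Defs
  imports "HOL-Analysis.Analysis"
begin

type_synonym pt = "real \<times> real"

definition cross :: "pt \<Rightarrow> pt \<Rightarrow> real" where
  "cross a b = fst a * snd b - snd a * fst b"

text \<open>Vertices are v 0, ..., v (n-1) (0-based), indices taken modulo n.\<close>
definition vx :: "nat \<Rightarrow> (nat \<Rightarrow> pt) \<Rightarrow> int \<Rightarrow> pt" where
  "vx n v k = v (nat (k mod int n))"

text \<open>Strictly convex polygon with vertices listed in clockwise order: every other vertex
  lies strictly to the right of the directed line from v k to v (k+1).\<close>
definition cw_convex_polygon :: "nat \<Rightarrow> (nat \<Rightarrow> pt) \<Rightarrow> bool" where
  "cw_convex_polygon n v \<longleftrightarrow> n \<ge> 3 \<and>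
     (\<forall>k<n. \<forall>m<n. m \<noteq> k \<and> m \<noteq> Suc k mod n \<longrightarrow>
        cross (v (Suc k mod n) - v k) (v m - v k) < 0)"

definition polygon :: "nat \<Rightarrow> (nat \<Rightarrow> pt) \<Rightarrow> pt set" where
  "polygon n v = convex hull (v ` {..<n})"

definition edge :: "nat \<Rightarrow> (nat \<Rightarrow> pt) \<Rightarrow> nat \<Rightarrow> pt set" where
  "edge n v k = open_segment (v k) (v (Suc k mod n))"

definition eline :: "nat \<Rightarrow> (nat \<Rightarrow> pt) \<Rightarrow> nat \<Rightarrow> pt set" where
  "eline n v k = affine hull {v k, v (Suc k mod n)}"

definition no_parallel_edges :: "nat \<Rightarrow> (nat \<Rightarrow> pt) \<Rightarrow> bool" where
  "no_parallel_edges n v \<longleftrightarrow> (\<forall>k<n. \<forall>m<n. k \<noteq> m \<longrightarrow>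
      cross (v (Suc k mod n) - v k) (v (Suc m mod n) - v m) \<noteq> 0)"

definition isect :: "nat \<Rightarrow> (nat \<Rightarrow> pt) \<Rightarrow> nat \<Rightarrow> nat \<Rightarrow> pt" where
  "isect n v i j = (THE X. X \<in> eline n v i \<inter> eline n v j)"

definition chasing :: "nat \<Rightarrow> (nat \<Rightarrow> pt) \<Rightarrow> nat \<Rightarrow> nat \<Rightarrow> bool" where
  "chasing n v i j \<longleftrightarrow> i \<noteq> j \<and>
     (\<exists>t::real. t \<ge> 1 \<and> isect n v i j = v i + t *\<^sub>R (v (Suc i mod n) - v i))"

definition disprod :: "pt set \<Rightarrow> pt set \<Rightarrow> pt \<Rightarrow> real" where
  "disprod l l' X = infdist X l * infdist X l'"

definition farthest_vertex :: "nat \<Rightarrow> (nat \<Rightarrow> pt) \<Rightarrow> nat \<Rightarrow> pt" where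
  "farthest_vertex n v i = (THE X. X \<in> v ` {..<n} \<and>
      (\<forall>Y \<in> v ` {..<n}. infdist Y (eline n v i) \<le> infdist X (eline n v i)))"

text \<open>Clockwise arc-length-free parametrisation of the boundary: parameter s in [k, k+1]
  runs along the edge from v k to v (k+1); periodic with period n.\<close>
definition bpt :: "nat \<Rightarrow> (nat \<Rightarrow> pt) \<Rightarrow> real \<Rightarrow> pt" where
  "bpt n v s = vx n v \<lfloor>s\<rfloor> + (s - of_int \<lfloor>s\<rfloor>) *\<^sub>R (vx n v (\<lfloor>s\<rfloor> + 1) - vx n v \<lfloor>s\<rfloor>)"

text \<open>[X cw X']: closed clockwise arc from X to X'.\<close>
definition arc_cc :: "nat \<Rightarrow> (nat \<Rightarrow> pt) \<Rightarrow> pt \<Rightarrow> pt \<Rightarrow> pt set" where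
  "arc_cc n v X X' = {bpt n v u | u. \<exists>s s'. 0 \<le> s \<and> s < real n \<and> bpt n v s = X \<and>
      s \<le> s' \<and> s' < s + real n \<and> bpt n v s' = X' \<and> s \<le> u \<and> u \<le> s'}"

text \<open>(X cw X'): the same arc without its endpoints.\<close>
definition arc_oo :: "nat \<Rightarrow> (nat \<Rightarrow> pt) \<Rightarrow> pt \<Rightarrow> pt \<Rightarrow> pt set" where
  "arc_oo n v X X' = {bpt n v u | u. \<exists>s s'. 0 \<le> s \<and> s < real n \<and> bpt n v s = X \<and>
      s \<le> s' \<and> s' < s + real n \<and> bpt n v s' = X' \<and> s < u \<and> u < s'}"

end

theory Submission
  imports Defs
begin

(* Let p and q be the heights over the lines of e_i and e_j: affine functions, nonnegative
   on P and proportional to the distances, so disprod is a constant multiple of p q.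
   A maximiser Z exists by compactness, and it is unique because at the midpoint of two
   maximisers AM-GM would give a larger value. Maximality yields the first-order condition
   q Z (p - p Z) + p Z (q - q Z) <= 0 on P: Z maximises a nonzero linear functional and hence
   lies on a closed edge. Chasing means cross (dir i) (dir j) < 0, so moving along
   dir j - dir i raises both p and q, and Z cannot be interior. On an edge e_k the
   first-order condition holds with equality along the edge, which makes Z the midpoint of
   I_ik and I_jk. The two arc conditions come from a Pluecker-type identity expressing, for a
   chord AB, the side of AB on which Z lies through the values of p and q at A, B and Z; it is
   applied to the chords from v_i to v_(j+1) (using that p q at their midpoint is at most
   p Z q Z) and from D_j to D_i (using the first-order condition at D_i and D_j). *)

section \<open>Planar cross product\<close>

lemma cross_simps:
  "cross (a + b) c = cross a c + cross b c"
  "cross a (b + c) = cross a b + cross a c"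
  "cross (a - b) c = cross a c - cross b c"
  "cross a (b - c) = cross a b - cross a c"
  "cross (r *\<^sub>R a) c = r * cross a c"
  "cross a (r *\<^sub>R c) = r * cross a c"
  "cross (- a) c = - cross a c"
  "cross a (- c) = - cross a c"
  "cross a a = 0"
  "cross 0 a = 0" "cross a 0 = 0"
  by (auto simp: cross_def algebra_simps)

lemma cross_commute: "cross a b = - cross b a"
  by (simp add: cross_def)

lemma cross_eq_inner: "cross x h = x \<bullet> (snd h, - fst h)"
  by (cases x) (simp add: cross_def)

lemma cross_pluecker: "cross h y * cross d z - cross h z * cross d y = cross h d * cross y z"
  by (simp add: cross_def algebra_simps)

lemma cross_cramer: "cross a b *\<^sub>R x = cross x b *\<^sub>R a + cross a x *\<^sub>R b"
  by (cases a; cases b; cases x) (simp add: cross_def algebra_simps)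

lemma cross_basis_eq_0:
  assumes "cross a b \<noteq> 0" "cross a x = 0" "cross b x = 0"
  shows "x = 0"
  using cross_cramer[of a b x] assms cross_commute[of x b] by simp

lemma cross_left_eq_0_imp_eq_0:
  assumes "\<And>z. cross h z = 0" shows "h = 0"
  using assms[of "(1,0)"] assms[of "(0,1)"] by (cases h) (simp add: cross_def zero_prod_def)

lemma cross_sq_add_inner_sq: "(cross a b)\<^sup>2 + (a \<bullet> b)\<^sup>2 = (norm a)\<^sup>2 * (norm b)\<^sup>2"
  by (cases a; cases b) (simp add: cross_def norm_Pair power2_eq_square algebra_simps)

lemma abs_cross_le: "\<bar>cross a b\<bar> \<le> norm a * norm b"
proof -
  have "(cross a b)\<^sup>2 \<le> (norm a * norm b)\<^sup>2"
    using cross_sq_add_inner_sq[of a b] zero_le_power2[of "a \<bullet> b"]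
    unfolding power_mult_distrib by linarith
  then show ?thesis using abs_le_square_iff[of "cross a b" "norm a * norm b"] by simp
qed

lemma abs_cross_orthogonal:
  assumes "a \<bullet> b = 0" shows "\<bar>cross a b\<bar> = norm a * norm b"
proof -
  have "\<bar>cross a b\<bar>\<^sup>2 = (norm a * norm b)\<^sup>2"
    using cross_sq_add_inner_sq[of a b] assms by (simp add: power_mult_distrib)
  then show ?thesis by (rule power2_eq_imp_eq) auto
qed

lemma cross_neg_trans:
  assumes "cross u x \<le> 0" "cross u y < 0" "cross u z < 0" "cross x y < 0" "cross y z < 0"
  shows "cross x z < 0"
proof -
  have "cross u z * cross x y > 0" "cross u x * cross y z \<ge> 0"
    using assms by (simp_all add: mult_neg_neg mult_nonpos_nonpos)
  then have "cross u y * cross x z > 0" using cross_pluecker[of u y x z] by linarith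
  then show ?thesis using assms(2) by (simp add: zero_less_mult_iff)
qed

lemma convex_hull_cross_le:
  assumes "\<And>x. x \<in> S \<Longrightarrow> cross x h \<le> c" and "X \<in> convex hull S"
  shows "cross X h \<le> c"
proof -
  have "convex hull S \<subseteq> {x. (snd h, - fst h) \<bullet> x \<le> c}"
    using assms(1) by (intro hull_minimal convex_halfspace_le) (auto simp: cross_eq_inner inner_commute)
  then show ?thesis using assms(2) by (auto simp: cross_eq_inner inner_commute)
qed

lemma mem_affine_hull_pair_iff_cross:
  fixes a b X :: pt
  assumes "a \<noteq> b"
  shows "X \<in> affine hull {a,b} \<longleftrightarrow> cross (b - a) (X - a) = 0"
proof
  assume "X \<in> affine hull {a,b}"
  then obtain u where "X = a + u *\<^sub>R (b - a)" unfolding affine_hull_2_alt by blast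
  then show "cross (b - a) (X - a) = 0" by (simp add: cross_simps)
next
  assume c: "cross (b - a) (X - a) = 0"
  define d where "d = b - a"
  define r where "r = X - a - ((X - a) \<bullet> d / (norm d)\<^sup>2) *\<^sub>R d"
  have "d \<noteq> 0" using assms by (simp add: d_def)
  then have "d \<bullet> r = 0"
    by (simp add: r_def inner_diff_right inner_commute power2_norm_eq_inner)
  moreover have "cross d r = 0" using c by (simp add: r_def d_def cross_simps)
  ultimately have "r = 0" using abs_cross_orthogonal[of d r] \<open>d \<noteq> 0\<close> by simp
  then have "X = a + ((X - a) \<bullet> d / (norm d)\<^sup>2) *\<^sub>R (b - a)" by (simp add: r_def d_def)
  then show "X \<in> affine hull {a,b}" unfolding affine_hull_2_alt by blast
qed

lemma infdist_affine_hull_pair: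
  fixes a b X :: pt
  assumes "a \<noteq> b"
  shows "infdist X (affine hull {a,b}) = \<bar>cross (b - a) (X - a)\<bar> / norm (b - a)"
proof -
  define d where "d = b - a"
  have d: "norm d > 0" using assms by (simp add: d_def)
  have on_line: "cross d (X - Y) = cross d (X - a)" if "Y \<in> affine hull {a,b}" for Y
    using that mem_affine_hull_pair_iff_cross[OF assms] by (simp add: d_def cross_simps)
  have lower: "\<bar>cross d (X - a)\<bar> / norm d \<le> dist X Y" if "Y \<in> affine hull {a,b}" for Y
    using abs_cross_le[of d "X - Y"] on_line[OF that] d
    by (simp add: dist_norm divide_le_eq mult.commute)
  define Y0 where "Y0 = a + ((X - a) \<bullet> d / (norm d)\<^sup>2) *\<^sub>R d"
  have Y0: "Y0 \<in> affine hull {a,b}"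
    unfolding mem_affine_hull_pair_iff_cross[OF assms] Y0_def d_def by (simp add: cross_simps)
  have "d \<bullet> (X - Y0) = 0"
    using d by (simp add: Y0_def inner_diff_right inner_add_right inner_commute power2_norm_eq_inner)
  then have "dist X Y0 = \<bar>cross d (X - a)\<bar> / norm d"
    using abs_cross_orthogonal[of d "X - Y0"] on_line[OF Y0] d by (simp add: dist_norm)
  then have "infdist X (affine hull {a,b}) \<le> \<bar>cross d (X - a)\<bar> / norm d"
    using infdist_le[OF Y0, of X] by linarith
  moreover have "\<bar>cross d (X - a)\<bar> / norm d \<le> infdist X (affine hull {a,b})"
    using lower Y0 unfolding infdist_def by (auto intro: cINF_greatest)
  ultimately show ?thesis by (simp add: d_def)
qed

section \<open>Clockwise convex polygons\<close>

locale cw_polygon =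
  fixes n :: nat and v :: "nat \<Rightarrow> pt"
  assumes cw: "cw_convex_polygon n v"
begin

abbreviation nxt :: "nat \<Rightarrow> nat" where "nxt k \<equiv> Suc k mod n"

abbreviation P :: "pt set" where "P \<equiv> polygon n v"

definition dir :: "nat \<Rightarrow> pt" where "dir k = v (nxt k) - v k"

text \<open>Twice the signed area of the triangle v k, v (k+1), X, positive on the side of P;
  on P it is norm (dir k) times the distance from X to the line of edge k.\<close>
definition height :: "nat \<Rightarrow> pt \<Rightarrow> real" where "height k X = cross (X - v k) (dir k)"

lemma n_ge_3: "n \<ge> 3" using cw by (simp add: cw_convex_polygon_def)

lemma n_pos: "n > 0" using n_ge_3 by simp

lemma nxt_less: "nxt k < n" using n_pos by simp

lemma nxt_inj: "k < n \<Longrightarrow> m < n \<Longrightarrow> nxt k = nxt m \<Longrightarrow> k = m"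
  using n_pos by (simp add: mod_Suc split: if_splits)

lemma height_vertex_pos: "k < n \<Longrightarrow> m < n \<Longrightarrow> m \<noteq> k \<Longrightarrow> m \<noteq> nxt k \<Longrightarrow> height k (v m) > 0"
  using cw unfolding cw_convex_polygon_def height_def dir_def
  by (metis cross_commute neg_0_less_iff_less)

lemma height_eq: "height k X = cross X (dir k) - cross (v k) (dir k)"
  by (simp add: height_def cross_simps)

lemma height_diff: "height k X - height k Y = cross (X - Y) (dir k)"
  by (simp add: height_eq cross_simps)

lemma height_add: "height k (X + Y) = height k X + cross Y (dir k)"
  by (simp add: height_eq cross_simps)

lemma height_combination: "height k ((1 - t) *\<^sub>R X + t *\<^sub>R Y) = (1 - t) * height k X + t * height k Y"
  by (simp add: height_eq cross_simps algebra_simps)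

lemma height_midpoint: "height k (midpoint X Y) = (height k X + height k Y) / 2"
  by (simp add: height_eq cross_simps midpoint_def algebra_simps)

lemma height_self: "height k (v k) = 0"
  by (simp add: height_def cross_simps)

lemma height_nxt: "height k (v (nxt k)) = 0"
  by (simp add: height_def dir_def cross_simps)

definition after :: "nat \<Rightarrow> nat \<Rightarrow> nat" where "after a e = (a + e) mod n"

definition gap :: "nat \<Rightarrow> nat \<Rightarrow> nat" where "gap a m = (if a \<le> m then m - a else m + n - a)"

lemma after_eq: "a < n \<Longrightarrow> e < n \<Longrightarrow> after a e = (if a + e < n then a + e else a + e - n)"
  unfolding after_def by (simp add: mod_if)

lemma after_less: "after a e < n" unfolding after_def using n_pos by simp

lemma nxt_after: "nxt (after a e) = after a (Suc e)"
  unfolding after_def by (simp add: mod_Suc_eq)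

lemma after_0: "a < n \<Longrightarrow> after a 0 = a" unfolding after_def by simp

lemma after_n: "a < n \<Longrightarrow> after a n = a" unfolding after_def by simp

lemma after_inj: "a < n \<Longrightarrow> e < n \<Longrightarrow> e' < n \<Longrightarrow> after a e = after a e' \<Longrightarrow> e = e'"
  by (simp add: after_eq split: if_splits)

lemma gap_less: "a < n \<Longrightarrow> m < n \<Longrightarrow> gap a m < n"
  unfolding gap_def by arith

lemma after_gap: "a < n \<Longrightarrow> m < n \<Longrightarrow> after a (gap a m) = m"
  by (simp add: gap_def after_eq)

lemma gap_after: "a < n \<Longrightarrow> e < n \<Longrightarrow> gap a (after a e) = e"
  unfolding gap_def after_eq by arith

lemma gap_eq_0_iff: "a < n \<Longrightarrow> m < n \<Longrightarrow> gap a m = 0 \<longleftrightarrow> m = a"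
  by (auto simp: gap_def)

lemma gap_inj: "a < n \<Longrightarrow> m < n \<Longrightarrow> b < n \<Longrightarrow> gap a m = gap a b \<Longrightarrow> m = b"
  by (metis after_gap)

lemma gap_nxt:
  assumes a: "a < n" and k: "k < n"
  shows "gap a (nxt k) = (if gap a k = n - 1 then 0 else Suc (gap a k))"
proof -
  have "nxt k = after a (Suc (gap a k))" using nxt_after[of a "gap a k"] after_gap[OF a k] by simp
  then show ?thesis using after_n[OF a] gap_after[OF a, of "Suc (gap a k)"] gap_less[OF a k] a
    by (cases "gap a k = n - 1") (auto simp: gap_def)
qed

lemma gap_nxt_self: "a < n \<Longrightarrow> gap a (nxt a) = 1"
  using gap_nxt[of a a] gap_eq_0_iff[of a a] n_ge_3 by simp

lemma after_2_not_adjacent: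
  assumes k: "k < n" shows "after k 2 < n" "after k 2 \<noteq> k" "after k 2 \<noteq> nxt k"
  using after_inj[OF k, of 2 0] after_inj[OF k, of 2 1] n_ge_3 after_less after_0[OF k]
    nxt_after[of k 0] by auto

lemma exists_vertex_height_pos: "k < n \<Longrightarrow> \<exists>m<n. height k (v m) > 0"
  using after_2_not_adjacent height_vertex_pos by blast

lemma dir_nonzero: "k < n \<Longrightarrow> dir k \<noteq> 0"
  using exists_vertex_height_pos by (fastforce simp: height_def cross_simps)

lemma vertex_ne_nxt: "k < n \<Longrightarrow> v k \<noteq> v (nxt k)"
  by (metis dir_def dir_nonzero right_minus_eq)

lemma vertex_in_P: "m < n \<Longrightarrow> v m \<in> P"
  unfolding polygon_def by (rule hull_inc) simp

lemma compact_P: "compact P"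
  unfolding polygon_def by (simp add: finite_imp_compact_convex_hull)

lemma convex_P: "convex P" unfolding polygon_def by simp

lemma polygon_cross_le: "(\<And>m. m < n \<Longrightarrow> cross (v m) h \<le> c) \<Longrightarrow> X \<in> P \<Longrightarrow> cross X h \<le> c"
  unfolding polygon_def by (rule convex_hull_cross_le) auto

lemma height_nonneg: "k < n \<Longrightarrow> X \<in> P \<Longrightarrow> height k X \<ge> 0"
proof -
  assume k: "k < n" and X: "X \<in> P"
  have "height k (v m) \<ge> 0" if "m < n" for m
    using height_vertex_pos[OF k that] height_self height_nxt by (metis less_eq_real_def)
  then have "cross (v m) (- dir k) \<le> - cross (v k) (dir k)" if "m < n" for m
    using that by (simp add: height_eq cross_simps)
  from polygon_cross_le[OF this X] show ?thesis by (simp add: height_eq cross_simps)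
qed

lemma height_le_of_vertices:
  assumes "\<And>m. m < n \<Longrightarrow> height k (v m) \<le> c" "X \<in> P"
  shows "height k X \<le> c"
proof -
  have "cross (v m) (dir k) \<le> c + cross (v k) (dir k)" if "m < n" for m
    using assms(1)[OF that] by (simp add: height_eq)
  from polygon_cross_le[OF this assms(2)] show ?thesis by (simp add: height_eq)
qed

lemma mem_eline_iff: "k < n \<Longrightarrow> X \<in> eline n v k \<longleftrightarrow> height k X = 0"
  unfolding eline_def using mem_affine_hull_pair_iff_cross[OF vertex_ne_nxt, of k X]
  by (simp add: height_def dir_def cross_commute[of "X - v k"])

lemma infdist_eline: "k < n \<Longrightarrow> X \<in> P \<Longrightarrow> infdist X (eline n v k) = height k X / norm (dir k)"
  using infdist_affine_hull_pair[OF vertex_ne_nxt, of k X] height_nonneg[of k X]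
  by (simp add: eline_def dir_def height_def cross_commute[of "v (nxt k) - v k"])

lemma turn_after_consecutive:
  assumes a: "a < n" and e: "1 \<le> e" "Suc e < n"
  shows "cross (v (after a e) - v a) (v (after a (Suc e)) - v a) < 0"
proof -
  have "a \<noteq> after a e" "a \<noteq> nxt (after a e)"
    using after_inj[OF a, of e 0] after_inj[OF a, of "Suc e" 0] after_0[OF a] e
    unfolding nxt_after by auto
  then have "height (after a e) (v a) > 0" using height_vertex_pos[OF after_less a] by auto
  moreover have "height (after a e) (v a) = - cross (v (after a e) - v a) (v (after a (Suc e)) - v a)"
    by (simp add: height_def dir_def nxt_after cross_def algebra_simps)
  ultimately show ?thesis by simp
qed

lemma turn_after_first:
  assumes a: "a < n" and e: "2 \<le> e" "e < n"
  shows "cross (v (after a 1) - v a) (v (after a e) - v a) < 0"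
proof -
  have n1: "nxt a = after a 1" using nxt_after[of a 0] after_0[OF a] by simp
  have "after a e \<noteq> a" "after a e \<noteq> nxt a"
    using after_inj[OF a, of e 0] after_inj[OF a, of e 1] after_0[OF a] e unfolding n1 by auto
  then have "height a (v (after a e)) > 0" using height_vertex_pos[OF a after_less] by auto
  then show ?thesis unfolding height_def dir_def n1 using cross_commute[of "v (after a e) - v a"] by simp
qed

lemma vertices_cw_ordered:
  assumes a: "a < n" and e: "1 \<le> e"
  shows "e < e' \<Longrightarrow> e' < n \<Longrightarrow> cross (v (after a e) - v a) (v (after a e') - v a) < 0"
proof (induction e')
  case 0
  then show ?case by simp
next
  case (Suc e'')
  show ?case
  proof (cases "e = e''")
    case True
    then show ?thesis using turn_after_consecutive[OF a e] Suc.prems by simp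
  next
    case False
    then have ee: "e < e''" using Suc.prems by simp
    have "cross (v (after a 1) - v a) (v (after a e) - v a) \<le> 0"
      using turn_after_first[OF a, of e] e ee Suc.prems
      by (cases "e = 1") (simp_all add: cross_simps)
    moreover have "cross (v (after a 1) - v a) (v (after a e'') - v a) < 0"
      "cross (v (after a 1) - v a) (v (after a (Suc e'')) - v a) < 0"
      using turn_after_first[OF a, of e''] turn_after_first[OF a, of "Suc e''"] e ee Suc.prems
      by simp_all
    moreover have "cross (v (after a e) - v a) (v (after a e'') - v a) < 0"
      using Suc.IH ee Suc.prems by simp
    moreover have "cross (v (after a e'') - v a) (v (after a (Suc e'')) - v a) < 0"
      using turn_after_consecutive[OF a, of e''] ee e Suc.prems by simp
    ultimately show ?thesis by (rule cross_neg_trans)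
  qed
qed

lemma chord_left:
  assumes "a < n" "b < n" "m < n" "gap a m < gap a b" "m \<noteq> a"
  shows "cross (v b - v a) (v m - v a) > 0"
proof -
  have "gap a m \<ge> 1" using gap_eq_0_iff[of a m] assms by auto
  then have "cross (v (after a (gap a m)) - v a) (v (after a (gap a b)) - v a) < 0"
    using vertices_cw_ordered[OF assms(1)] assms gap_less by blast
  then show ?thesis using after_gap assms cross_commute[of "v b - v a"] by simp
qed

lemma chord_right:
  assumes "a < n" "b < n" "m < n" "gap a m > gap a b" "b \<noteq> a"
  shows "cross (v b - v a) (v m - v a) < 0"
proof -
  have "gap a b \<ge> 1" using gap_eq_0_iff[of a b] assms by auto
  then have "cross (v (after a (gap a b)) - v a) (v (after a (gap a m)) - v a) < 0"
    using vertices_cw_ordered[OF assms(1)] assms gap_less by blast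
  then show ?thesis using after_gap assms by simp
qed

lemma vertices_not_collinear:
  assumes "a < n" "b < n" "m < n" "a \<noteq> b" "m \<noteq> a" "m \<noteq> b"
  shows "cross (v b - v a) (v m - v a) \<noteq> 0"
  using gap_inj[of a m b] chord_left[OF assms(1-3)] chord_right[OF assms(1-3)] assms
  by (metis less_irrefl linorder_neqE_nat)

lemma no_three_vertices_on_level_line:
  assumes h: "h \<noteq> 0" and abm: "a < n" "b < n" "m < n" "a \<noteq> b" "m \<noteq> a" "m \<noteq> b"
    and eq: "cross (v b) h = cross (v a) h" "cross (v m) h = cross (v a) h"
  shows False
proof -
  define D where "D = v b - v a"
  define y where "y = v m - v a"
  have hD: "cross h D = 0" "cross h y = 0"
    using eq unfolding D_def y_def by (simp_all add: cross_simps cross_commute[of h])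
  have "cross D y \<noteq> 0" using vertices_not_collinear[OF abm] D_def y_def by simp
  then have "cross h q = 0" for q
    using cross_pluecker[of h y D q] hD by simp
  then show False using cross_left_eq_0_imp_eq_0 h by blast
qed

text \<open>If b is not adjacent to a, then nxt a and nxt b lie strictly on opposite sides of
  the chord from a to b, so a functional constant on the chord cannot be maximal there.\<close>
lemma support_vertices_adjacent:
  assumes h: "h \<noteq> 0" and ab: "a < n" "b < n" "a \<noteq> b"
    and mx: "\<And>m. m < n \<Longrightarrow> cross (v m) h \<le> cross (v a) h"
    and eq: "cross (v b) h = cross (v a) h"
  shows "b = nxt a \<or> a = nxt b"
proof (rule ccontr)
  assume nadj: "\<not> (b = nxt a \<or> a = nxt b)"
  have ob: "gap a b \<noteq> 0" "gap a b \<noteq> 1" "gap a b \<noteq> n - 1"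
    using gap_eq_0_iff[OF ab(1)] gap_nxt_self[OF ab(1)] gap_inj[OF ab(1) ab(2) nxt_less]
      gap_nxt[OF ab(1) ab(2)] gap_eq_0_iff[OF ab(1) nxt_less] ab nadj
    by (metis, metis, metis)
  define D where "D = v b - v a"
  define y where "y = v (nxt a) - v a"
  define z where "z = v (nxt b) - v a"
  have Dy: "cross D y > 0"
    using chord_left[OF ab(1) ab(2) nxt_less[of a]] gap_nxt_self[OF ab(1)]
      gap_eq_0_iff[OF ab(1) nxt_less[of a]] ob D_def y_def by simp
  have Dz: "cross D z < 0"
    using chord_right[OF ab(1) ab(2) nxt_less] gap_nxt[OF ab(1) ab(2)] ob ab D_def z_def by simp
  have hD: "cross h D = 0" using eq unfolding D_def
    by (simp add: cross_simps cross_commute[of h])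
  have hy: "cross h y \<ge> 0" and hz: "cross h z \<ge> 0"
    using mx[OF nxt_less] unfolding y_def z_def by (simp_all add: cross_simps cross_commute[of h])
  have "cross h y * cross D z - cross h z * cross D y = 0"
    using cross_pluecker[of h y D z] hD by simp
  moreover have "cross h y * cross D z \<le> 0" "cross h z * cross D y \<ge> 0"
    using hy hz Dy Dz by (simp_all add: mult_nonneg_nonpos)
  ultimately have "cross h y * cross D z = 0" by linarith
  then have "cross h y = 0" using Dz by simp
  then have "cross h q = 0" for q
    using cross_pluecker[of h y D q] hD Dy by simp
  then show False using cross_left_eq_0_imp_eq_0 h by blast
qed

lemma support_vertices_on_edge:
  assumes h: "h \<noteq> 0" and le: "\<And>m. m < n \<Longrightarrow> cross (v m) h \<le> c"
  shows "\<exists>k<n. \<forall>m<n. cross (v m) h = c \<longrightarrow> m = k \<or> m = nxt k"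
proof (cases "\<exists>a<n. \<exists>b<n. b \<noteq> a \<and> cross (v a) h = c \<and> cross (v b) h = c")
  case True
  then obtain a b where ab: "a < n" "b < n" "b \<noteq> a" "cross (v a) h = c" "cross (v b) h = c"
    by blast
  have "b = nxt a \<or> a = nxt b"
    using support_vertices_adjacent[OF h ab(1,2)] ab le by simp
  moreover have "m = a \<or> m = b" if "m < n" "cross (v m) h = c" for m
    using no_three_vertices_on_level_line[OF h ab(1,2) that(1)] ab that by auto
  ultimately show ?thesis using ab by blast
next
  case False
  then show ?thesis using n_pos by blast
qed

lemma support_maximiser_on_edge:
  assumes h: "h \<noteq> 0" and X: "X \<in> P" and mx: "\<And>Y. Y \<in> P \<Longrightarrow> cross Y h \<le> cross X h"
  shows "\<exists>k<n. X \<in> closed_segment (v k) (v (nxt k))"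
proof -
  define T where "T = P \<inter> {Y. (snd h, - fst h) \<bullet> Y = cross X h}"
  have "T face_of P"
    unfolding T_def using mx
    by (intro face_of_Int_supporting_hyperplane_le convex_P) (simp add: cross_eq_inner inner_commute)
  then obtain S where S: "S \<subseteq> v ` {..<n}" "T = convex hull S"
    using face_of_convex_hull_subset[of "v ` {..<n}" T] unfolding polygon_def
    by (metis finite_imp_compact finite_imageI finite_lessThan)
  have "cross (v m) h \<le> cross X h" if "m < n" for m using mx[OF vertex_in_P[OF that]] .
  from support_vertices_on_edge[OF h this]
  obtain k where k: "k < n" "\<forall>m<n. cross (v m) h = cross X h \<longrightarrow> m = k \<or> m = nxt k"
    by blast
  have "S \<subseteq> {v k, v (nxt k)}"
  proof
    fix y assume y: "y \<in> S"
    then obtain m where m: "m < n" "y = v m" using S(1) by auto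
    have "y \<in> T" using y hull_subset[of S convex] unfolding S(2) by blast
    then have "cross (v m) h = cross X h" unfolding T_def m(2) by (simp add: cross_eq_inner inner_commute)
    then show "y \<in> {v k, v (nxt k)}" using k m by auto
  qed
  then have "T \<subseteq> closed_segment (v k) (v (nxt k))"
    unfolding S(2) segment_convex_hull by (rule hull_mono)
  moreover have "X \<in> T" using X unfolding T_def by (simp add: cross_eq_inner inner_commute)
  ultimately show ?thesis using k(1) by blast
qed

lemma midpoint_in_P: "X \<in> P \<Longrightarrow> Y \<in> P \<Longrightarrow> midpoint X Y \<in> P"
  using convex_contains_segment[THEN iffD1, OF convex_P] midpoint_in_closed_segment by blast

lemma chord_identity:
  "cross (dir k) (dir m) * cross (B - A) (X - A) =
     (height m X - height m A) * (height k B - height k A)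
     + (height k X - height k A) * (height m A - height m B)"
  by (simp add: height_diff cross_def algebra_simps)

subsection \<open>Boundary arcs\<close>

lemma bpt_add:
  assumes "0 \<le> t" "t \<le> 1"
  shows "bpt n v (real m + t) = (1 - t) *\<^sub>R v (m mod n) + t *\<^sub>R v (Suc m mod n)"
proof -
  have v0: "vx n v (int m) = v (m mod n)" and v1: "vx n v (int m + 1) = v (Suc m mod n)"
    unfolding vx_def by (metis nat_int zmod_int, metis nat_int of_nat_Suc zmod_int add.commute)
  show ?thesis
  proof (cases "t = 1")
    case True
    then have "\<lfloor>real m + t\<rfloor> = int m + 1" by simp
    then show ?thesis using True v1 by (simp add: bpt_def algebra_simps)
  next
    case False
    then have f: "\<lfloor>real m + t\<rfloor> = int m" using assms by (simp add: floor_eq_iff)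
    show ?thesis unfolding bpt_def f v0 v1 by (simp add: algebra_simps)
  qed
qed

lemma bpt_of_nat: "bpt n v (real m) = v (m mod n)"
  using bpt_add[of 0 m] by simp

lemma arc_cc_I:
  assumes "0 \<le> s0" "s0 < real n" "bpt n v s0 = X0" "s0 \<le> s1" "s1 < s0 + real n"
    "bpt n v s1 = X1" "s0 \<le> u" "u \<le> s1"
  shows "bpt n v u \<in> arc_cc n v X0 X1"
  unfolding arc_cc_def using assms by blast

lemma arc_oo_I:
  assumes "0 \<le> s0" "s0 < real n" "bpt n v s0 = X0" "s0 \<le> s1" "s1 < s0 + real n"
    "bpt n v s1 = X1" "s0 < u" "u < s1"
  shows "bpt n v u \<in> arc_oo n v X0 X1"
  unfolding arc_oo_def using assms by blast

lemma arc_vertex_params: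
  assumes ab: "a < n" "b < n" "a \<noteq> b"
  shows "0 \<le> real b" "real b < real n" "bpt n v (real b) = v b"
    "real b \<le> real b + real (n - gap a b)" "real b + real (n - gap a b) < real b + real n"
    "bpt n v (real b + real (n - gap a b)) = v a"
proof -
  have d: "0 < gap a b" "gap a b < n" using gap_eq_0_iff[OF ab(1,2)] gap_less[OF ab(1,2)] ab by auto
  have "(b + (n - gap a b)) mod n = (a + gap a b + (n - gap a b)) mod n"
    using after_gap[OF ab(1,2)] unfolding after_def by (metis mod_add_left_eq)
  also have "\<dots> = a" using d ab by simp
  finally show "bpt n v (real b + real (n - gap a b)) = v a"
    using bpt_of_nat[of "b + (n - gap a b)"] by simp
  show "0 \<le> real b" "real b < real n" "bpt n v (real b) = v b"
    "real b \<le> real b + real (n - gap a b)" "real b + real (n - gap a b) < real b + real n"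
    using ab d by (simp_all add: bpt_of_nat)
qed

lemma vertices_in_arc_cc:
  assumes "a < n" "b < n" "a \<noteq> b"
  shows "v b \<in> arc_cc n v (v b) (v a)" "v a \<in> arc_cc n v (v b) (v a)"
  using arc_cc_I[OF arc_vertex_params[OF assms], of "real b"]
    arc_cc_I[OF arc_vertex_params[OF assms], of "real b + real (n - gap a b)"]
    arc_vertex_params[OF assms]
  by simp_all

lemma edge_point_bpt:
  assumes ab: "a < n" "b < n" and k: "k < n" "gap a b \<le> gap a k" and t: "0 \<le> t" "t \<le> 1"
  shows "bpt n v (real (b + (gap a k - gap a b)) + t) = (1 - t) *\<^sub>R v k + t *\<^sub>R v (nxt k)"
proof -
  have "(b + (gap a k - gap a b)) mod n = (a + gap a b + (gap a k - gap a b)) mod n"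
    using after_gap[OF ab] unfolding after_def by (metis mod_add_left_eq)
  also have "\<dots> = k" using after_gap[OF ab(1) k(1)] k(2) unfolding after_def by simp
  finally show ?thesis using bpt_add[OF t, of "b + (gap a k - gap a b)"] by (metis mod_Suc_eq)
qed

lemma edge_point_in_arc:
  assumes ab: "a < n" "b < n" "a \<noteq> b" and k: "k < n" "gap a b \<le> gap a k"
    and X: "X \<in> closed_segment (v k) (v (nxt k))"
  shows "X \<in> arc_cc n v (v b) (v a) \<and> (X \<noteq> v a \<longrightarrow> X \<noteq> v b \<longrightarrow> X \<in> arc_oo n v (v b) (v a))"
proof -
  obtain t where t: "0 \<le> t" "t \<le> 1" "X = (1 - t) *\<^sub>R v k + t *\<^sub>R v (nxt k)"
    using X by (auto simp: in_segment)
  define d where "d = gap a b"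
  define e where "e = gap a k"
  have en: "e < n" using gap_less ab k e_def by simp
  define m where "m = b + (e - d)"
  have X_bpt: "bpt n v (real m + t) = X"
    using edge_point_bpt[OF ab(1,2) k t(1,2)] t(3) unfolding m_def d_def e_def by simp
  have u0: "real b \<le> real m + t" and u1: "real m + t \<le> real b + real (n - d)"
    using t en k(2) unfolding m_def d_def e_def by (simp_all add: of_nat_diff)
  have "X \<in> arc_cc n v (v b) (v a)"
    using arc_cc_I[OF arc_vertex_params[OF ab] u0] u1 X_bpt unfolding d_def by simp
  moreover have "X \<in> arc_oo n v (v b) (v a)" if xa: "X \<noteq> v a" and xb: "X \<noteq> v b"
  proof -
    have "real b < real m + t"
    proof (rule ccontr)
      assume "\<not> real b < real m + t"
      then have "e = d" "t = 0" using u0 t k(2) unfolding m_def d_def e_def by auto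
      moreover from \<open>e = d\<close> have "k = b"
        using after_gap[OF ab(1) k(1)] after_gap[OF ab(1,2)] unfolding e_def d_def by metis
      ultimately show False using xb t(3) by simp
    qed
    moreover have "real m + t < real b + real (n - d)"
    proof (rule ccontr)
      assume "\<not> real m + t < real b + real (n - d)"
      then have "real e + t = real n" using u1 k(2) en unfolding m_def d_def e_def
        by (simp add: of_nat_diff)
      then have "e = n - 1" "t = 1" using en t by linarith+
      then have "nxt k = a"
        using gap_nxt[OF ab(1) k(1)] gap_eq_0_iff[OF ab(1) nxt_less[of k]] e_def by simp
      then show False using xa t(3) \<open>t = 1\<close> by simp
    qed
    ultimately show ?thesis
      using arc_oo_I[OF arc_vertex_params[OF ab]] X_bpt unfolding d_def by blast
  qed
  ultimately show ?thesis by blast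
qed

lemma edge_left_of_chord:
  assumes ab: "a < n" "b < n" "a \<noteq> b" "b \<noteq> nxt a" and k: "k < n" "gap a k < gap a b"
    and X: "X \<in> closed_segment (v k) (v (nxt k))" and s: "cross (v b - v a) (X - v a) \<le> 0"
  shows "X = v a \<or> X = v b"
proof -
  obtain t where t: "0 \<le> t" "t \<le> 1" "X = (1 - t) *\<^sub>R v k + t *\<^sub>R v (nxt k)"
    using X by (auto simp: in_segment)
  define D where "D = v b - v a"
  have dn: "gap a b < n" using gap_less ab by simp
  have gnx: "gap a (nxt k) = Suc (gap a k)" using gap_nxt[OF ab(1) k(1)] k(2) dn by simp
  have sk: "k = a \<or> cross D (v k - v a) > 0"
    using chord_left[OF ab(1,2) k] D_def by blast
  have sn: "nxt k = b \<or> cross D (v (nxt k) - v a) > 0"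
  proof (cases "nxt k = b")
    case False
    then have "gap a (nxt k) \<noteq> gap a b" using gap_inj[OF ab(1) nxt_less[of k] ab(2)] by blast
    then have "gap a (nxt k) < gap a b" "nxt k \<noteq> a"
      using gnx k(2) gap_eq_0_iff[OF ab(1) nxt_less[of k]] by simp_all
    then show ?thesis using chord_left[OF ab(1,2) nxt_less[of k]] D_def by blast
  qed simp
  have "X - v a = (1 - t) *\<^sub>R (v k - v a) + t *\<^sub>R (v (nxt k) - v a)"
    unfolding t(3) by (simp add: algebra_simps)
  then have "(1 - t) * cross D (v k - v a) + t * cross D (v (nxt k) - v a) \<le> 0"
    using s unfolding D_def by (simp add: cross_simps)
  moreover have "cross D (v k - v a) \<ge> 0" "cross D (v (nxt k) - v a) \<ge> 0"
    using sk sn cross_simps(9)[of D] unfolding D_def by (auto simp: cross_simps(11))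
  ultimately have z: "(1 - t) * cross D (v k - v a) = 0" "t * cross D (v (nxt k) - v a) = 0"
    using t by (smt (verit) mult_nonneg_nonneg)+
  consider "t = 0" | "t = 1" | "0 < t" "t < 1" using t by linarith
  then show ?thesis
  proof cases
    case 1
    then show ?thesis using z sk t(3) by auto
  next
    case 2
    then show ?thesis using z sn t(3) by auto
  next
    case 3
    then have "k = a" "nxt k = b" using z sk sn by auto
    then show ?thesis using ab(4) by simp
  qed
qed

lemma right_of_chord_in_arc:
  assumes ab: "a < n" "b < n" "a \<noteq> b" "b \<noteq> nxt a" and k: "k < n"
    and X: "X \<in> closed_segment (v k) (v (nxt k))" and s: "cross (v b - v a) (X - v a) \<le> 0"
  shows "X \<in> arc_cc n v (v b) (v a) \<and> (X \<noteq> v a \<longrightarrow> X \<noteq> v b \<longrightarrow> X \<in> arc_oo n v (v b) (v a))"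
proof (cases "gap a b \<le> gap a k")
  case True
  then show ?thesis using edge_point_in_arc[OF ab(1-3) k True X] by blast
next
  case False
  then show ?thesis
    using edge_left_of_chord[OF ab k _ X s] vertices_in_arc_cc[OF ab(1-3)] by auto
qed

end

locale cw_polygon_nonparallel = cw_polygon +
  assumes no_parallel: "no_parallel_edges n v"
begin

lemma cross_dir_nonzero: "k < n \<Longrightarrow> m < n \<Longrightarrow> k \<noteq> m \<Longrightarrow> cross (dir k) (dir m) \<noteq> 0"
  using no_parallel unfolding no_parallel_edges_def dir_def by blast

lemma height_pair_inj:
  assumes "k < n" "m < n" "k \<noteq> m" "height k X = height k Y" "height m X = height m Y"
  shows "X = Y"
proof -
  have "cross (dir k) (X - Y) = 0" "cross (dir m) (X - Y) = 0"
    using height_diff[of k X Y] height_diff[of m X Y] assms cross_commute[of "X - Y"] by simp_all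
  then show ?thesis using cross_basis_eq_0 cross_dir_nonzero assms by (metis eq_iff_diff_eq_0)
qed

lemma isect_eqI:
  assumes "k < n" "m < n" "k \<noteq> m" "height k X = 0" "height m X = 0"
  shows "isect n v k m = X"
  unfolding isect_def
proof (rule the_equality)
  show "X \<in> eline n v k \<inter> eline n v m" using assms mem_eline_iff by simp
next
  fix Y assume "Y \<in> eline n v k \<inter> eline n v m"
  then show "Y = X" using height_pair_inj[OF assms(1-3)] assms mem_eline_iff by auto
qed

lemma height_max_vertex_unique:
  assumes k: "k < n" and am: "a < n" "m < n"
    and amax: "\<And>m'. m' < n \<Longrightarrow> height k (v m') \<le> height k (v a)"
    and eq: "height k (v m) = height k (v a)"
  shows "m = a"
proof (rule ccontr)
  assume "m \<noteq> a"
  have pos: "height k (v a) > 0"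
    using exists_vertex_height_pos[OF k] amax by (meson less_le_trans)
  have "cross (v m') (dir k) \<le> cross (v a) (dir k)" if "m' < n" for m'
    using amax[OF that] by (simp add: height_eq)
  moreover have "cross (v m) (dir k) = cross (v a) (dir k)" using eq by (simp add: height_eq)
  ultimately have "m = nxt a \<or> a = nxt m"
    using support_vertices_adjacent[OF dir_nonzero[OF k] am \<open>m \<noteq> a\<close>[symmetric]] by blast
  then show False
  proof
    assume "m = nxt a"
    then have "cross (dir a) (dir k) = 0" using eq height_diff[of k "v m" "v a"] by (simp add: dir_def)
    then have "a = k" using cross_dir_nonzero[OF am(1) k] by auto
    then show False using pos height_self by simp
  next
    assume "a = nxt m"
    then have "cross (dir m) (dir k) = 0" using eq height_diff[of k "v a" "v m"] by (simp add: dir_def)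
    then have "m = k" using cross_dir_nonzero[OF am(2) k] by auto
    then show False using pos eq height_self by simp
  qed
qed

lemma farthest_vertex_eq:
  assumes k: "k < n"
  obtains a where "a < n" "farthest_vertex n v k = v a" "\<And>m. m < n \<Longrightarrow> height k (v m) \<le> height k (v a)"
proof -
  define f where "f m = height k (v m)" for m
  have fin: "finite (f ` {..<n})" "f ` {..<n} \<noteq> {}" using n_pos by auto
  obtain a where a: "a < n" "f a = Max (f ` {..<n})" using Max_in[OF fin] by auto
  have amax: "f m \<le> f a" if "m < n" for m using a Max_ge[OF fin(1)] that by auto
  have nd: "norm (dir k) > 0" using dir_nonzero[OF k] by simp
  have dist: "infdist (v m) (eline n v k) = f m / norm (dir k)" if "m < n" for m
    using infdist_eline[OF k vertex_in_P[OF that]] f_def by simp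
  have "farthest_vertex n v k = v a"
    unfolding farthest_vertex_def
  proof (rule the_equality)
    show "v a \<in> v ` {..<n} \<and> (\<forall>Y\<in>v ` {..<n}. infdist Y (eline n v k) \<le> infdist (v a) (eline n v k))"
      using a amax dist nd by (auto simp: divide_right_mono)
  next
    fix X
    assume X: "X \<in> v ` {..<n} \<and> (\<forall>Y\<in>v ` {..<n}. infdist Y (eline n v k) \<le> infdist X (eline n v k))"
    then obtain m where m: "m < n" "X = v m" by auto
    then have "f a \<le> f m" using X a(1) dist nd by (auto simp: divide_le_cancel)
    then show "X = v a"
      using height_max_vertex_unique[OF k a(1) m(1)] amax m unfolding f_def by force
  qed
  then show ?thesis using that a(1) amax unfolding f_def by blast
qed

end

section \<open>The product of the heights over two chasing edges\<close>

lemma product_eq_of_midpoint_le: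
  fixes p1 q1 p2 q2 :: real
  assumes pos: "0 < p1" "0 < q1" "0 < p2" "0 < q2" and eq: "p1 * q1 = p2 * q2"
    and mid: "((p1 + p2) / 2) * ((q1 + q2) / 2) \<le> p1 * q1"
  shows "p1 = p2 \<and> q1 = q2"
proof -
  have s: "p1 * q2 + p2 * q1 \<le> 2 * (p1 * q1)" using mid eq by (simp add: algebra_simps)
  have "(p1 * q2 - p2 * q1)\<^sup>2 = (p1 * q2 + p2 * q1)\<^sup>2 - 4 * (p1 * q1) * (p2 * q2)"
    by (simp add: power2_eq_square algebra_simps)
  also have "\<dots> \<le> (2 * (p1 * q1))\<^sup>2 - 4 * (p1 * q1) * (p1 * q1)"
    using power_mono[OF s, of 2] pos eq by simp
  finally have "(p1 * q2 - p2 * q1)\<^sup>2 \<le> 0" by (simp add: power2_eq_square)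
  then have "p1 * q2 = p2 * q1" by simp
  then have "q2 * (p1 * q2) = q1 * (p1 * q1)" using eq by (metis mult.assoc mult.commute)
  then have "q2\<^sup>2 = q1\<^sup>2" using pos by (simp add: power2_eq_square)
  then have "q1 = q2" using pos by (simp add: power2_eq_iff)
  then show ?thesis using eq pos by simp
qed

lemma product_first_order:
  fixes a b \<alpha> \<beta> :: real
  assumes "\<And>\<tau>. 0 < \<tau> \<Longrightarrow> \<tau> \<le> 1 \<Longrightarrow> (a + \<tau> * \<alpha>) * (b + \<tau> * \<beta>) \<le> a * b"
  shows "b * \<alpha> + a * \<beta> \<le> 0"
proof (rule ccontr)
  define c where "c = b * \<alpha> + a * \<beta>"
  define K where "K = \<bar>\<alpha> * \<beta>\<bar>"
  assume "\<not> b * \<alpha> + a * \<beta> \<le> 0"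
  then have c: "c > 0" unfolding c_def by simp
  define \<tau> where "\<tau> = c / (c + K)"
  have \<tau>: "0 < \<tau>" "\<tau> \<le> 1" "\<tau> * K < c"
    using c by (auto simp: \<tau>_def K_def field_simps)
  have "\<tau> * \<tau> * (\<alpha> * \<beta>) \<ge> \<tau> * \<tau> * (- K)"
    unfolding K_def by (rule mult_left_mono) simp_all
  moreover have "\<tau> * (c - \<tau> * K) > 0" using \<tau> by simp
  moreover have "(a + \<tau> * \<alpha>) * (b + \<tau> * \<beta>) = a * b + \<tau> * c + \<tau> * \<tau> * (\<alpha> * \<beta>)"
    unfolding c_def by (simp add: algebra_simps)
  ultimately have "(a + \<tau> * \<alpha>) * (b + \<tau> * \<beta>) > a * b" by (simp add: algebra_simps)
  then show False using assms[OF \<tau>(1,2)] by simp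
qed

lemma sum_ge_of_product_ge:
  fixes x y c :: real
  assumes "0 \<le> x" "0 \<le> y" "0 \<le> c" "c\<^sup>2 \<le> 4 * x * y"
  shows "c \<le> x + y"
proof -
  have "4 * x * y \<le> (x + y)\<^sup>2" using zero_le_power2[of "x - y"] by (simp add: power2_eq_square algebra_simps)
  then have "c\<^sup>2 \<le> (x + y)\<^sup>2" using assms(4) by linarith
  then show ?thesis by (rule power2_le_imp_le) (use assms in simp)
qed

locale edge_pair = cw_polygon_nonparallel +
  fixes i j :: nat
  assumes i_less: "i < n" and j_less: "j < n" and chasing: "chasing n v i j"
begin

abbreviation p :: "pt \<Rightarrow> real" where "p \<equiv> height i"

abbreviation q :: "pt \<Rightarrow> real" where "q \<equiv> height j"

definition \<kappa> :: real where "\<kappa> = cross (dir i) (dir j)"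

definition hprod :: "pt \<Rightarrow> real" where "hprod X = p X * q X"

lemma i_ne_j: "i \<noteq> j" using chasing unfolding chasing_def by simp

lemma kappa_nonzero: "\<kappa> \<noteq> 0"
  unfolding \<kappa>_def using cross_dir_nonzero i_less j_less i_ne_j by simp

lemma isect_ij: "isect n v i j = v i + (- q (v i) / \<kappa>) *\<^sub>R dir i"
proof (rule isect_eqI[OF i_less j_less i_ne_j])
  have h: "p (v i + t *\<^sub>R dir i) = 0" "q (v i + t *\<^sub>R dir i) = q (v i) + t * \<kappa>" for t
    unfolding height_add by (simp_all add: height_self \<kappa>_def cross_simps)
  show "p (v i + (- q (v i) / \<kappa>) *\<^sub>R dir i) = 0" "q (v i + (- q (v i) / \<kappa>) *\<^sub>R dir i) = 0"
    using h[of "- q (v i) / \<kappa>"] kappa_nonzero by simp_all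
qed

lemma chasing_param: "- q (v i) / \<kappa> \<ge> 1"
proof -
  obtain t where t: "t \<ge> 1" "isect n v i j = v i + t *\<^sub>R dir i"
    using chasing unfolding chasing_def dir_def by auto
  then have "t = - q (v i) / \<kappa>"
    using isect_ij dir_nonzero[OF i_less] by (metis add_left_cancel scaleR_cancel_right)
  then show ?thesis using t(1) by simp
qed

lemma i_ne_nxt_j: "i \<noteq> nxt j"
  using chasing_param height_nxt by force

lemma q_vi_pos: "q (v i) > 0"
  using height_vertex_pos[OF j_less i_less] i_ne_j i_ne_nxt_j by simp

lemma kappa_neg: "\<kappa> < 0"
  using chasing_param q_vi_pos kappa_nonzero by (smt (verit) divide_neg_pos)

lemma p_nxt_j_pos: "p (v (nxt j)) > 0"
  using height_vertex_pos[OF i_less nxt_less[of j]] i_ne_nxt_j nxt_inj[OF j_less i_less] i_ne_j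
  by fastforce

lemma disprod_eq:
  "X \<in> P \<Longrightarrow> disprod (eline n v i) (eline n v j) X = hprod X / (norm (dir i) * norm (dir j))"
  unfolding disprod_def hprod_def using infdist_eline i_less j_less by simp

lemma disprod_le_iff:
  assumes "Y \<in> P" "Z \<in> P"
  shows "disprod (eline n v i) (eline n v j) Y \<le> disprod (eline n v i) (eline n v j) Z
    \<longleftrightarrow> hprod Y \<le> hprod Z"
proof -
  have "norm (dir i) * norm (dir j) > 0" using dir_nonzero i_less j_less by simp
  then show ?thesis using disprod_eq assms by (simp add: divide_le_cancel)
qed

definition mid :: pt where "mid = midpoint (v i) (v (nxt j))"

lemma mid_in_P: "mid \<in> P"
  unfolding mid_def using vertex_in_P[OF i_less] vertex_in_P[OF nxt_less] by (rule midpoint_in_P)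

lemma hprod_mid: "hprod mid = p (v (nxt j)) * q (v i) / 4"
  unfolding hprod_def mid_def height_midpoint using height_self height_nxt by simp

lemma hprod_mid_pos: "hprod mid > 0"
  unfolding hprod_mid using p_nxt_j_pos q_vi_pos by simp

lemma exists_hprod_max: "\<exists>Z\<in>P. \<forall>Y\<in>P. hprod Y \<le> hprod Z"
proof -
  have "continuous_on P hprod" unfolding hprod_def height_def cross_def by (intro continuous_intros)
  then show ?thesis using continuous_attains_sup[OF compact_P] mid_in_P by blast
qed

text \<open>A second maximiser would make the midpoint strictly better, by AM-GM.\<close>
lemma hprod_max_unique:
  assumes Z1: "Z1 \<in> P" "\<forall>Y\<in>P. hprod Y \<le> hprod Z1" and Z2: "Z2 \<in> P" "\<forall>Y\<in>P. hprod Y \<le> hprod Z2"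
  shows "Z1 = Z2"
proof -
  have eq: "p Z1 * q Z1 = p Z2 * q Z2" using Z1 Z2 unfolding hprod_def by force
  have "p Z1 * q Z1 > 0" using Z1 mid_in_P hprod_mid_pos unfolding hprod_def by force
  moreover have "0 \<le> p Z1" "0 \<le> q Z1" "0 \<le> p Z2" "0 \<le> q Z2"
    using height_nonneg[OF i_less] height_nonneg[OF j_less] Z1(1) Z2(1) by auto
  ultimately have pos: "0 < p Z1" "0 < q Z1" "0 < p Z2" "0 < q Z2"
    using eq by (metis less_eq_real_def mult_zero_left mult_zero_right less_irrefl)+
  have "midpoint Z1 Z2 \<in> P" using midpoint_in_P Z1(1) Z2(1) .
  then have "hprod (midpoint Z1 Z2) \<le> hprod Z1" using Z1(2) by blast
  then have "((p Z1 + p Z2) / 2) * ((q Z1 + q Z2) / 2) \<le> p Z1 * q Z1"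
    unfolding hprod_def height_midpoint .
  then have "p Z1 = p Z2 \<and> q Z1 = q Z2" using product_eq_of_midpoint_le[OF pos eq] by blast
  then show ?thesis using height_pair_inj[OF i_less j_less i_ne_j] by blast
qed

end

locale hprod_maximiser = edge_pair +
  fixes Z :: pt
  assumes Z_in_P: "Z \<in> P" and Z_max: "\<And>Y. Y \<in> P \<Longrightarrow> hprod Y \<le> hprod Z"
begin

lemma heights_Z_pos: "p Z > 0" "q Z > 0"
proof -
  have "p Z * q Z > 0" using Z_max[OF mid_in_P] hprod_mid_pos unfolding hprod_def by linarith
  then show "p Z > 0" "q Z > 0"
    using height_nonneg[OF i_less Z_in_P] height_nonneg[OF j_less Z_in_P]
    by (auto simp: zero_less_mult_iff)
qed

lemma first_order:
  assumes Y: "Y \<in> P"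
  shows "q Z * (p Y - p Z) + p Z * (q Y - q Z) \<le> 0"
proof (rule product_first_order)
  fix \<tau> :: real assume "0 < \<tau>" "\<tau> \<le> 1"
  then have "(1 - \<tau>) *\<^sub>R Z + \<tau> *\<^sub>R Y \<in> P" using convex_P Z_in_P Y unfolding convex_alt by simp
  from Z_max[OF this] show "(p Z + \<tau> * (p Y - p Z)) * (q Z + \<tau> * (q Y - q Z)) \<le> p Z * q Z"
    unfolding hprod_def height_combination by (simp add: algebra_simps)
qed

text \<open>Since \<kappa> < 0, moving along dir j - dir i increases both heights.\<close>
lemma Z_frontier: "Z \<in> frontier P"
proof -
  have "Z \<notin> interior P"
  proof
    assume "Z \<in> interior P"
    then obtain \<epsilon> where e: "\<epsilon> > 0" "ball Z \<epsilon> \<subseteq> P" by (auto simp: mem_interior)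
    define u where "u = dir j - dir i"
    define \<delta> where "\<delta> = \<epsilon> / (2 * (norm u + 1))"
    have d: "\<delta> > 0" using e by (simp add: \<delta>_def add_nonneg_pos)
    have "\<delta> * norm u \<le> \<delta> * (norm u + 1)" using d by simp
    also have "\<dots> = \<epsilon> / 2"
      using add_nonneg_pos[OF norm_ge_zero[of u], of 1] by (simp add: \<delta>_def field_simps)
    also have "\<dots> < \<epsilon>" using e by simp
    finally have "\<delta> * norm u < \<epsilon>" .
    then have "Z + \<delta> *\<^sub>R u \<in> P" using d e by (auto simp: dist_norm)
    moreover have "p (Z + \<delta> *\<^sub>R u) - p Z = - \<delta> * \<kappa>" "q (Z + \<delta> *\<^sub>R u) - q Z = - \<delta> * \<kappa>"
      unfolding height_add u_def \<kappa>_def by (simp_all add: cross_simps cross_commute[of "dir j"])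
    ultimately have "q Z * (- \<delta> * \<kappa>) + p Z * (- \<delta> * \<kappa>) \<le> 0"
      using first_order by metis
    then have "(q Z + p Z) * (- \<delta> * \<kappa>) \<le> 0" by (simp only: distrib_right)
    moreover have "- \<delta> * \<kappa> > 0" using d kappa_neg by (simp add: mult_pos_neg)
    ultimately show False using mult_pos_pos[of "q Z + p Z" "- \<delta> * \<kappa>"] heights_Z_pos by linarith
  qed
  then show ?thesis
    using Z_in_P compact_P by (simp add: frontier_def compact_imp_closed closure_closed)
qed

lemma Z_on_edge: "\<exists>k<n. Z \<in> closed_segment (v k) (v (nxt k))"
proof (rule support_maximiser_on_edge[OF _ Z_in_P])
  define h where "h = q Z *\<^sub>R dir i + p Z *\<^sub>R dir j"
  have "cross (dir i) h = p Z * \<kappa>" unfolding h_def \<kappa>_def by (simp add: cross_simps)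
  then show "h \<noteq> 0" using heights_Z_pos kappa_nonzero by (auto simp: cross_simps)
  fix Y assume "Y \<in> P"
  from first_order[OF this] show "cross Y h \<le> cross Z h"
    unfolding h_def height_eq by (simp add: cross_simps algebra_simps)
qed

lemma Z_ne_vi: "Z \<noteq> v i"
  using heights_Z_pos height_self by auto

lemma Z_ne_v_nxt_j: "Z \<noteq> v (nxt j)"
  using heights_Z_pos height_nxt by auto

text \<open>By the chord identity the claim amounts to p0 q Z + q0 p Z \<ge> p0 q0, where p0 = p (v (nxt j))
  and q0 = q (v i); this follows by AM-GM from p Z q Z \<ge> p0 q0 / 4, the value at mid.\<close>
lemma Z_right_of_chord: "cross (v (nxt j) - v i) (Z - v i) \<le> 0"
proof -
  define p0 where "p0 = p (v (nxt j))"
  define q0 where "q0 = q (v i)"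
  have pos: "0 < p0" "0 < q0" using p_nxt_j_pos q_vi_pos p0_def q0_def by simp_all
  have "p0 * q0 \<le> 4 * (p Z * q Z)"
    using Z_max[OF mid_in_P] unfolding hprod_mid by (simp add: hprod_def p0_def q0_def)
  then have "(p0 * q0)\<^sup>2 \<le> 4 * (p0 * q Z) * (q0 * p Z)"
    using mult_left_mono[of "p0 * q0" "4 * (p Z * q Z)" "p0 * q0"] pos
    by (simp add: power2_eq_square algebra_simps)
  then have "p0 * q0 \<le> p0 * q Z + q0 * p Z"
    using heights_Z_pos pos by (intro sum_ge_of_product_ge) simp_all
  moreover have "\<kappa> * cross (v (nxt j) - v i) (Z - v i) = p0 * q Z + q0 * p Z - p0 * q0"
    using chord_identity[of i j "v (nxt j)" "v i" Z] unfolding \<kappa>_def p0_def q0_def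
    by (simp add: height_self height_nxt algebra_simps)
  ultimately have "\<kappa> * cross (v (nxt j) - v i) (Z - v i) \<ge> 0" by linarith
  then show ?thesis using kappa_neg by (simp add: zero_le_mult_iff)
qed

lemma Z_in_arc_oo: "Z \<in> arc_oo n v (v (nxt j)) (v i)"
proof -
  obtain k where k: "k < n" "Z \<in> closed_segment (v k) (v (nxt k))" using Z_on_edge by blast
  have "nxt j \<noteq> nxt i" using nxt_inj i_less j_less i_ne_j by blast
  then show ?thesis
    using right_of_chord_in_arc[OF i_less nxt_less i_ne_nxt_j _ k Z_right_of_chord] Z_ne_vi Z_ne_v_nxt_j
    by blast
qed

context
  fixes a b :: nat
  assumes a: "a < n" "\<And>m. m < n \<Longrightarrow> p (v m) \<le> p (v a)"
    and b: "b < n" "\<And>m. m < n \<Longrightarrow> q (v m) \<le> q (v b)"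
begin

lemma farthest_ne_nxt: "a \<noteq> nxt b"
proof
  assume abn: "a = nxt b"
  have "p (v a) > 0" using exists_vertex_height_pos[OF i_less] a by (meson less_le_trans)
  then have "i \<noteq> b" "i \<noteq> a" using abn height_self height_nxt by auto
  then have "height b (v i) > 0" using height_vertex_pos[OF b(1) i_less] abn by simp
  then have "cross (v a - v b) (v i - v b) < 0"
    unfolding height_def dir_def abn using cross_commute[of "v i - v b"] by simp
  moreover have "\<kappa> * cross (v a - v b) (v i - v b) =
      (q (v i) - q (v b)) * (p (v a) - p (v b)) + (0 - p (v b)) * (q (v b) - q (v a))"
    using chord_identity[of i j "v a" "v b" "v i"] unfolding \<kappa>_def by (simp add: height_self)
  moreover have "(q (v i) - q (v b)) * (p (v a) - p (v b)) \<le> 0" "(0 - p (v b)) * (q (v b) - q (v a)) \<le> 0"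
    using a b i_less height_nonneg[OF i_less vertex_in_P[OF b(1)]]
    by (simp_all add: mult_nonpos_nonneg mult_nonpos_nonpos)
  ultimately have "\<kappa> * cross (v a - v b) (v i - v b) \<le> 0" by linarith
  then show False using kappa_neg \<open>cross (v a - v b) (v i - v b) < 0\<close> by (simp add: mult_le_0_iff)
qed

text \<open>Multiplying the first-order conditions at v a and v b and comparing with the
  chord identity.\<close>
lemma Z_right_of_farthest_chord: "cross (v a - v b) (Z - v b) \<le> 0"
proof -
  have fa: "q Z * (p (v a) - p Z) \<le> p Z * (q Z - q (v a))"
    and fb: "p Z * (q (v b) - q Z) \<le> q Z * (p Z - p (v b))"
    using first_order[OF vertex_in_P[OF a(1)]] first_order[OF vertex_in_P[OF b(1)]]
    by (simp_all add: algebra_simps)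
  have "p Z \<le> p (v a)" "q Z \<le> q (v b)"
    using height_le_of_vertices[OF a(2) Z_in_P] height_le_of_vertices[OF b(2) Z_in_P] by simp_all
  then have nn: "0 \<le> q Z * (p (v a) - p Z)" "0 \<le> p Z * (q (v b) - q Z)"
    using heights_Z_pos by simp_all
  have "(q Z * (p (v a) - p Z)) * (p Z * (q (v b) - q Z))
      \<le> (p Z * (q Z - q (v a))) * (q Z * (p Z - p (v b)))"
    using nn fa by (intro mult_mono[OF fa fb]) linarith+
  then have "(p Z * q Z) * ((p (v a) - p Z) * (q (v b) - q Z))
      \<le> (p Z * q Z) * ((p Z - p (v b)) * (q Z - q (v a)))"
    by (simp add: mult_ac)
  then have key: "(p (v a) - p Z) * (q (v b) - q Z) \<le> (p Z - p (v b)) * (q Z - q (v a))"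
    by (rule mult_left_le_imp_le) (use heights_Z_pos in simp)
  have "\<kappa> * cross (v a - v b) (Z - v b) = (p Z - p (v b)) * (q Z - q (v a)) - (p (v a) - p Z) * (q (v b) - q Z)"
    using chord_identity[of i j "v a" "v b" Z] unfolding \<kappa>_def by (simp add: algebra_simps)
  then have "\<kappa> * cross (v a - v b) (Z - v b) \<ge> 0" using key by linarith
  then show ?thesis using kappa_neg by (simp add: zero_le_mult_iff)
qed

lemma Z_in_farthest_arc: "Z \<in> arc_cc n v (v a) (v b)"
proof (cases "a = b")
  case True
  then have "hprod Y \<le> hprod (v a)" if "Y \<in> P" for Y
    using height_le_of_vertices[OF a(2) that] height_le_of_vertices[OF b(2) that]
      height_nonneg[OF i_less that] height_nonneg[OF j_less that] unfolding hprod_def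
    by (simp add: mult_mono height_nonneg[OF i_less vertex_in_P[OF a(1)]])
  then have "Z = v a" using hprod_max_unique[OF Z_in_P _ vertex_in_P[OF a(1)]] Z_max by blast
  moreover have "bpt n v (real a) \<in> arc_cc n v (v a) (v a)"
    using arc_cc_I[of "real a" "v a" "real a" "v a" "real a"] a(1) n_pos bpt_of_nat[of a] by simp
  ultimately show ?thesis using True a(1) bpt_of_nat[of a] by simp
next
  case False
  obtain k where k: "k < n" "Z \<in> closed_segment (v k) (v (nxt k))" using Z_on_edge by blast
  show ?thesis
    using right_of_chord_in_arc[OF b(1) a(1) False[symmetric] farthest_ne_nxt k
        Z_right_of_farthest_chord]
    by (rule conjunct1)
qed

end

lemma Z_in_arc_cc: "Z \<in> arc_cc n v (farthest_vertex n v i) (farthest_vertex n v j)"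
proof -
  obtain a where "a < n" "farthest_vertex n v i = v a" "\<And>m. m < n \<Longrightarrow> p (v m) \<le> p (v a)"
    using farthest_vertex_eq[OF i_less] by blast
  moreover obtain b where "b < n" "farthest_vertex n v j = v b" "\<And>m. m < n \<Longrightarrow> q (v m) \<le> q (v b)"
    using farthest_vertex_eq[OF j_less] by blast
  ultimately show ?thesis using Z_in_farthest_arc by metis
qed

text \<open>The first-order condition at both ends of edge k makes q Z p + p Z q constant along the
  edge, which places the two intersection points symmetrically about Z.\<close>
lemma Z_edge_midpoint:
  assumes k: "k < n" and Z_edge: "Z \<in> edge n v k"
  shows "Z = midpoint (isect n v i k) (isect n v j k)"
proof -
  obtain u where u: "0 < u" "u < 1" "Z = (1 - u) *\<^sub>R v k + u *\<^sub>R v (nxt k)"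
    using Z_edge unfolding edge_def in_segment(2) by blast
  have Z: "Z = v k + u *\<^sub>R dir k" unfolding u(3) dir_def by (simp add: algebra_simps)
  define \<alpha> where "\<alpha> = cross (dir k) (dir i)"
  define \<beta> where "\<beta> = cross (dir k) (dir j)"
  have along: "p (Z + s *\<^sub>R dir k) = p Z + s * \<alpha>" "q (Z + s *\<^sub>R dir k) = q Z + s * \<beta>"
    "height k (Z + s *\<^sub>R dir k) = 0" for s
    unfolding height_add \<alpha>_def \<beta>_def Z by (simp_all add: height_self cross_simps)
  have "k \<noteq> i" "k \<noteq> j" using along(3)[of 0] heights_Z_pos by auto
  then have nz: "\<alpha> \<noteq> 0" "\<beta> \<noteq> 0" using cross_dir_nonzero k i_less j_less \<alpha>_def \<beta>_def by auto
  have ends: "v (nxt k) = Z + (1 - u) *\<^sub>R dir k" "v k = Z + (- u) *\<^sub>R dir k"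
    unfolding Z dir_def by (simp_all add: algebra_simps)
  have "(1 - u) * (q Z * \<alpha> + p Z * \<beta>) \<le> 0"
    using first_order[OF vertex_in_P[OF nxt_less[of k]]] unfolding ends(1) along
    by (simp add: algebra_simps)
  moreover have "(- u) * (q Z * \<alpha> + p Z * \<beta>) \<le> 0"
    using first_order[OF vertex_in_P[OF k]] unfolding ends(2) along
    by (simp add: algebra_simps)
  ultimately have const: "q Z * \<alpha> + p Z * \<beta> = 0"
    using u(1,2) by (simp add: mult_le_0_iff zero_le_mult_iff)
  have "isect n v i k = Z + (- p Z / \<alpha>) *\<^sub>R dir k"
    by (rule isect_eqI[OF i_less k \<open>k \<noteq> i\<close>[symmetric]]) (use nz in \<open>simp_all only: along, simp\<close>)
  moreover have "isect n v j k = Z + (- q Z / \<beta>) *\<^sub>R dir k"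
    by (rule isect_eqI[OF j_less k \<open>k \<noteq> j\<close>[symmetric]]) (use nz in \<open>simp_all only: along, simp\<close>)
  moreover have "q Z / \<beta> = - (p Z / \<alpha>)"
    using const nz by (simp add: field_simps)
  ultimately have "midpoint (isect n v i k) (isect n v j k) = Z"
    by (simp add: midpoint_eq_iff algebra_simps)
  then show ?thesis by simp
qed

end

theorem lemma4:
  fixes n :: nat and v :: "nat \<Rightarrow> real \<times> real" and i j :: nat
  assumes "cw_convex_polygon n v"
    and "no_parallel_edges n v"
    and "i < n" and "j < n"
    and "chasing n v i j"
  shows "(\<exists>!Z. Z \<in> polygon n v \<and>
            (\<forall>Y \<in> polygon n v. disprod (eline n v i) (eline n v j) Y
                               \<le> disprod (eline n v i) (eline n v j) Z))
       \<and> (\<forall>Z. Z \<in> polygon n v \<and>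
            (\<forall>Y \<in> polygon n v. disprod (eline n v i) (eline n v j) Y
                               \<le> disprod (eline n v i) (eline n v j) Z)
          \<longrightarrow> Z \<in> frontier (polygon n v)
            \<and> Z \<in> arc_cc n v (farthest_vertex n v i) (farthest_vertex n v j)
            \<and> Z \<in> arc_oo n v (v (Suc j mod n)) (v i)
            \<and> (\<forall>k<n. Z \<in> edge n v k \<longrightarrow> Z = midpoint (isect n v i k) (isect n v j k)))"
proof -
  interpret edge_pair n v i j using assms by unfold_locales auto
  have max_iff: "(Z \<in> P \<and> (\<forall>Y \<in> P. disprod (eline n v i) (eline n v j) Y
                               \<le> disprod (eline n v i) (eline n v j) Z))
      \<longleftrightarrow> (Z \<in> P \<and> (\<forall>Y \<in> P. hprod Y \<le> hprod Z))" for Z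
    using disprod_le_iff by blast
  have "\<exists>!Z. Z \<in> P \<and> (\<forall>Y \<in> P. hprod Y \<le> hprod Z)"
    using exists_hprod_max hprod_max_unique by (intro ex_ex1I) auto
  moreover have "Z \<in> frontier P \<and> Z \<in> arc_cc n v (farthest_vertex n v i) (farthest_vertex n v j)
      \<and> Z \<in> arc_oo n v (v (nxt j)) (v i)
      \<and> (\<forall>k<n. Z \<in> edge n v k \<longrightarrow> Z = midpoint (isect n v i k) (isect n v j k))"
    if "Z \<in> P" "\<forall>Y \<in> P. hprod Y \<le> hprod Z" for Z
  proof -
    interpret hprod_maximiser n v i j Z using that by unfold_locales auto
    show ?thesis using Z_frontier Z_in_arc_cc Z_in_arc_oo Z_edge_midpoint by blast
  qed
  ultimately show ?thesis unfolding max_iff by blast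
qed

end
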